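(* Let $H$ be a digraph (possibly with loops) and let $D$ be an $H$-colored tournament in which every directed $3$-cycle is an $H$-cycle. Then for every $k \geq 2$, $D$ has a $(k,H)$-kernel.
   Context: All digraphs are finite. A tournament is a digraph in which every two distinct vertices are joined by exactly one arc (no loops, no symmetric arcs). $D$ comes with a map $\rho: A(D)\to V(H)$. For a walk $W=(x_0,\ldots,x_n)$ in $D$, there is an obstruction on $x_i$ if $(\rho(x_{i-1},x_i),\rho(x_i,x_{i+1})) \notin A(H)$; for an open walk this is considered at internal vertices $x_i$, $1\le i\le n-1$, for a closed walk at all $i\in\{0,\ldots,n-1\}$ with indices modulo $n$. $O_H(W)$ is the set of indices with an obstruction; the $H$-length is $l_H(W)=|O_H(W)|+1$ for open $W$ and $|O_H(W)|$ for closed $W$. An $H$-cycle is a directed cycle with no obstructions. A $(k,H)$-kernel ($k\ge2$) is a set $S\subseteq V(D)$ such that for every two distinct $u,v\in S$ every directed $uv$-path in $D$ has $H$-length at least $k$, and for every $x\in V(D)\setminus S$ there is a directed path from $x$ to a vertex of $S$ of $H$-length at most $k-1$. *)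

theory Defs
  imports Main
begin

text \<open>D = (V, A); H = (VH, AH) (loops allowed in H). The colouring is
  rho :: 'a \<times> 'a \<Rightarrow> 'h, relevant on the arcs of D.\<close>

definition digraph :: "'a set \<Rightarrow> ('a \<times> 'a) set \<Rightarrow> bool" where
  "digraph V A \<longleftrightarrow> finite V \<and> A \<subseteq> V \<times> V"

definition tournament :: "'a set \<Rightarrow> ('a \<times> 'a) set \<Rightarrow> bool" where
  "tournament V A \<longleftrightarrow> digraph V A \<and> (\<forall>v. (v, v) \<notin> A) \<and>
     (\<forall>u\<in>V. \<forall>v\<in>V. u \<noteq> v \<longrightarrow> ((u, v) \<in> A \<longleftrightarrow> (v, u) \<notin> A))"

definition H_colouring :: "('a \<times> 'a) set \<Rightarrow> 'h set \<Rightarrow> ('a \<times> 'a \<Rightarrow> 'h) \<Rightarrow> bool" where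
  "H_colouring A VH rho \<longleftrightarrow> (\<forall>e\<in>A. rho e \<in> VH)"

definition dpath :: "'a set \<Rightarrow> ('a \<times> 'a) set \<Rightarrow> 'a list \<Rightarrow> bool" where
  "dpath V A xs \<longleftrightarrow> xs \<noteq> [] \<and> distinct xs \<and> set xs \<subseteq> V \<and>
     (\<forall>i. Suc i < length xs \<longrightarrow> (xs ! i, xs ! Suc i) \<in> A)"

definition obstructions_open :: "('h \<times> 'h) set \<Rightarrow> ('a \<times> 'a \<Rightarrow> 'h) \<Rightarrow> 'a list \<Rightarrow> nat set" where
  "obstructions_open AH rho xs = {i. 1 \<le> i \<and> Suc i < length xs \<and>
     (rho (xs ! (i - 1), xs ! i), rho (xs ! i, xs ! Suc i)) \<notin> AH}"

definition H_length_open :: "('h \<times> 'h) set \<Rightarrow> ('a \<times> 'a \<Rightarrow> 'h) \<Rightarrow> 'a list \<Rightarrow> nat" where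
  "H_length_open AH rho xs = card (obstructions_open AH rho xs) + 1"

definition three_cycles_are_H_cycles ::
  "'a set \<Rightarrow> ('a \<times> 'a) set \<Rightarrow> ('h \<times> 'h) set \<Rightarrow> ('a \<times> 'a \<Rightarrow> 'h) \<Rightarrow> bool" where
  "three_cycles_are_H_cycles V A AH rho \<longleftrightarrow>
     (\<forall>x\<in>V. \<forall>y\<in>V. \<forall>z\<in>V. x \<noteq> y \<and> y \<noteq> z \<and> x \<noteq> z \<and>
        (x, y) \<in> A \<and> (y, z) \<in> A \<and> (z, x) \<in> A \<longrightarrow>
        (rho (z, x), rho (x, y)) \<in> AH \<and> (rho (x, y), rho (y, z)) \<in> AH \<and>
        (rho (y, z), rho (z, x)) \<in> AH)"

definition kH_kernel ::
  "'a set \<Rightarrow> ('a \<times> 'a) set \<Rightarrow> ('h \<times> 'h) set \<Rightarrow> ('a \<times> 'a \<Rightarrow> 'h) \<Rightarrow> nat \<Rightarrow> 'a set \<Rightarrow> bool" where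
  "kH_kernel V A AH rho k S \<longleftrightarrow> S \<subseteq> V \<and>
     (\<forall>u\<in>S. \<forall>v\<in>S. u \<noteq> v \<longrightarrow>
        (\<forall>xs. dpath V A xs \<and> hd xs = u \<and> last xs = v \<longrightarrow> H_length_open AH rho xs \<ge> k)) \<and>
     (\<forall>x\<in>V - S. \<exists>xs. dpath V A xs \<and> hd xs = x \<and> last xs \<in> S \<and>
        H_length_open AH rho xs \<le> k - 1)"

end

theory Submission
  imports Defs
begin

(* If every directed 3-cycle is an H-cycle, H-path reachability propagates along arcs: if u
   reaches v by an H-path P (a path without obstructions) and v -> x, then u reaches x by an
   H-path. If x lies on P, cut P at x. Otherwise let w -> v be the last arc of P: if w -> x, argue
   inductively with P minus v; if x -> w, then w v x is a directed 3-cycle, so appending x to P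
   creates no obstruction at v. Hence a vertex v whose set of H-path predecessors is maximal
   under inclusion is reached from every vertex by an H-path, i.e. by a path of H-length 1, and
   {v} is a (k,H)-kernel for every k >= 2. *)

lemma obstructions_open_append_mono:
  "obstructions_open AH rho xs \<subseteq> obstructions_open AH rho (xs @ ys)"
  unfolding obstructions_open_def by (auto simp: nth_append)

lemma obstructions_open_snoc:
  "obstructions_open AH rho (xs @ [w, v, x]) =
     obstructions_open AH rho (xs @ [w, v]) \<union>
     (if (rho (w, v), rho (v, x)) \<in> AH then {} else {Suc (length xs)})"
  unfolding obstructions_open_def
  by (auto simp: nth_append less_Suc_eq Suc_diff_le split: if_splits)

lemma dpath_appendD1:
  assumes "dpath V A (xs @ ys)" "xs \<noteq> []"
  shows "dpath V A xs"
proof -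
  have "(xs ! i, xs ! Suc i) \<in> A" if "Suc i < length xs" for i
    using assms(1) that unfolding dpath_def by (auto simp: nth_append dest!: spec[of _ i])
  then show ?thesis
    using assms unfolding dpath_def by auto
qed

lemma dpath_arc:
  assumes "dpath V A (xs @ u # v # ys)"
  shows "(u, v) \<in> A"
  using assms unfolding dpath_def
  by (auto dest!: spec[of _ "length xs"] simp: nth_append)

lemma dpath_snoc:
  assumes "dpath V A xs" "x \<in> V" "x \<notin> set xs" "(last xs, x) \<in> A"
  shows "dpath V A (xs @ [x])"
  using assms unfolding dpath_def
  by (auto simp: nth_append less_Suc_eq last_conv_nth) (metis diff_Suc_Suc minus_nat.diff_0)

definition H_path ::
  "'a set \<Rightarrow> ('a \<times> 'a) set \<Rightarrow> ('h \<times> 'h) set \<Rightarrow> ('a \<times> 'a \<Rightarrow> 'h) \<Rightarrow> 'a list \<Rightarrow> bool" where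
  "H_path V A AH rho xs \<longleftrightarrow> dpath V A xs \<and> obstructions_open AH rho xs = {}"

lemma H_path_appendD1:
  "H_path V A AH rho (xs @ ys) \<Longrightarrow> xs \<noteq> [] \<Longrightarrow> H_path V A AH rho xs"
  unfolding H_path_def using dpath_appendD1 obstructions_open_append_mono by blast

lemma H_path_singleton: "v \<in> V \<Longrightarrow> H_path V A AH rho [v]"
  unfolding H_path_def dpath_def obstructions_open_def by auto

lemma H_path_arc:
  "(u, v) \<in> A \<Longrightarrow> u \<in> V \<Longrightarrow> v \<in> V \<Longrightarrow> u \<noteq> v \<Longrightarrow> H_path V A AH rho [u, v]"
  unfolding H_path_def dpath_def obstructions_open_def by auto

lemma H_path_snoc:
  assumes "H_path V A AH rho (xs @ [w, v])" "x \<in> V" "x \<notin> set (xs @ [w, v])" "(v, x) \<in> A"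
    and "(rho (w, v), rho (v, x)) \<in> AH"
  shows "H_path V A AH rho (xs @ [w, v, x])"
proof -
  have "dpath V A ((xs @ [w, v]) @ [x])"
    using assms(1-4) by (intro dpath_snoc) (simp_all add: H_path_def)
  moreover have "obstructions_open AH rho (xs @ [w, v, x]) = {}"
    using assms(1,5) by (simp add: H_path_def obstructions_open_snoc)
  ultimately show ?thesis by (simp add: H_path_def)
qed

lemma H_path_extend:
  assumes T: "tournament V A" and C: "three_cycles_are_H_cycles V A AH rho"
  shows "H_path V A AH rho P \<Longrightarrow> (last P, x) \<in> A \<Longrightarrow> x \<in> V \<Longrightarrow> x \<notin> set P \<Longrightarrow>
    \<exists>Q. H_path V A AH rho Q \<and> hd Q = hd P \<and> last Q = x"
proof (induction P rule: rev_induct)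
  case Nil
  then show ?case by (simp add: H_path_def dpath_def)
next
  case (snoc v P)
  have vV: "v \<in> V" and xv: "x \<noteq> v"
    using snoc.prems by (auto simp: H_path_def dpath_def)
  show ?case
  proof (cases "P = []")
    case True
    then show ?thesis
      using snoc.prems vV xv H_path_arc[of v x A V AH rho] by (intro exI[of _ "[v, x]"]) simp
  next
    case False
    then obtain P' w where P: "P = P' @ [w]" by (metis rev_exhaust)
    have dp: "dpath V A (P' @ [w, v])"
      using snoc.prems(1) P by (simp add: H_path_def)
    then have wv: "(w, v) \<in> A" using dpath_arc[of V A P' w v "[]"] by simp
    have wV: "w \<in> V" and w_ne_v: "w \<noteq> v" and xw: "x \<noteq> w"
      using dp snoc.prems(4) P by (auto simp: dpath_def)
    consider (shortcut) "(w, x) \<in> A" | (triangle) "(x, w) \<in> A"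
      using T wV xw snoc.prems(3) unfolding tournament_def by blast
    then show ?thesis
    proof cases
      case shortcut
      then obtain Q where "H_path V A AH rho Q" "hd Q = hd P" "last Q = x"
        using snoc.IH H_path_appendD1[OF snoc.prems(1) False] snoc.prems(3,4) P by auto
      then show ?thesis using False by auto
    next
      case triangle
      then have "(rho (w, v), rho (v, x)) \<in> AH"
        using C wV vV snoc.prems(3) w_ne_v xv xw wv snoc.prems(2)
        unfolding three_cycles_are_H_cycles_def by simp
      then have "H_path V A AH rho (P' @ [w, v, x])"
        using H_path_snoc[of V A AH rho P' w v x] snoc.prems P by simp
      then show ?thesis using P by (intro exI[of _ "P' @ [w, v, x]"]) (simp add: hd_append)
    qed
  qed
qed

definition H_reaching ::
  "'a set \<Rightarrow> ('a \<times> 'a) set \<Rightarrow> ('h \<times> 'h) set \<Rightarrow> ('a \<times> 'a \<Rightarrow> 'h) \<Rightarrow> 'a \<Rightarrow> 'a set" where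
  "H_reaching V A AH rho v = {u. \<exists>xs. H_path V A AH rho xs \<and> hd xs = u \<and> last xs = v}"

lemma H_reaching_self: "v \<in> V \<Longrightarrow> v \<in> H_reaching V A AH rho v"
  unfolding H_reaching_def using H_path_singleton by fastforce

lemma H_reaching_arc:
  "(u, v) \<in> A \<Longrightarrow> u \<in> V \<Longrightarrow> v \<in> V \<Longrightarrow> u \<noteq> v \<Longrightarrow> u \<in> H_reaching V A AH rho v"
  unfolding H_reaching_def using H_path_arc by fastforce

lemma H_reaching_mono_arc:
  assumes T: "tournament V A" and C: "three_cycles_are_H_cycles V A AH rho"
    and "(v, x) \<in> A" "x \<in> V"
  shows "H_reaching V A AH rho v \<subseteq> H_reaching V A AH rho x"
proof
  fix u assume "u \<in> H_reaching V A AH rho v"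
  then obtain P where P: "H_path V A AH rho P" "hd P = u" "last P = v"
    unfolding H_reaching_def by blast
  show "u \<in> H_reaching V A AH rho x"
  proof (cases "x \<in> set P")
    case True
    then obtain as bs where "P = as @ x # bs" by (meson split_list)
    then have "H_path V A AH rho (as @ [x])" "hd (as @ [x]) = u" "last (as @ [x]) = x"
      using P H_path_appendD1[of V A AH rho "as @ [x]" bs] by (auto simp: hd_append)
    then show ?thesis unfolding H_reaching_def by blast
  next
    case False
    then show ?thesis
      using H_path_extend[OF T C P(1)] P assms(3,4) unfolding H_reaching_def by auto
  qed
qed

lemma tournament_has_H_sink:
  assumes T: "tournament V A" and C: "three_cycles_are_H_cycles V A AH rho" and "V \<noteq> {}"
  shows "\<exists>v\<in>V. V \<subseteq> H_reaching V A AH rho v"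
proof -
  let ?R = "H_reaching V A AH rho"
  have "finite (?R ` V)" using T by (simp add: tournament_def digraph_def)
  then obtain v where vV: "v \<in> V" and maximal: "\<And>u. u \<in> V \<Longrightarrow> ?R v \<subseteq> ?R u \<Longrightarrow> ?R v = ?R u"
    using finite_has_maximal[of "?R ` V"] \<open>V \<noteq> {}\<close> by auto
  have "x \<in> ?R v" if xV: "x \<in> V" for x
  proof (cases "(v, x) \<in> A")
    case True
    then show ?thesis
      using maximal[OF xV] H_reaching_mono_arc[OF T C True xV] H_reaching_self[OF xV] by blast
  next
    case False
    then have "x = v \<or> (x, v) \<in> A" using T xV vV unfolding tournament_def by blast
    then show ?thesis using H_reaching_self H_reaching_arc xV vV by metis
  qed
  then show ?thesis using vV by blast
qed

lemma kH_kernel_H_sink: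
  assumes "v \<in> V" "V \<subseteq> H_reaching V A AH rho v" "k \<ge> 2"
  shows "kH_kernel V A AH rho k {v}"
  unfolding kH_kernel_def
proof (intro conjI ballI)
  fix x assume "x \<in> V - {v}"
  then obtain xs where "H_path V A AH rho xs" "hd xs = x" "last xs = v"
    using assms(2) unfolding H_reaching_def by blast
  then show "\<exists>xs. dpath V A xs \<and> hd xs = x \<and> last xs \<in> {v} \<and> H_length_open AH rho xs \<le> k - 1"
    using assms(3) unfolding H_path_def H_length_open_def by (intro exI[of _ xs]) simp
qed (use assms(1) in simp_all)

theorem corollary9:
  fixes V :: "'a set" and A :: "('a \<times> 'a) set"
    and VH :: "'h set" and AH :: "('h \<times> 'h) set"
    and rho :: "'a \<times> 'a \<Rightarrow> 'h" and k :: nat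
  assumes "digraph VH AH"
    and "tournament V A"
    and "H_colouring A VH rho"
    and "three_cycles_are_H_cycles V A AH rho"
    and "k \<ge> 2"
  shows "\<exists>S. kH_kernel V A AH rho k S"
proof (cases "V = {}")
  case True
  then have "kH_kernel V A AH rho k {}" unfolding kH_kernel_def by simp
  then show ?thesis ..
next
  case False
  then obtain v where "v \<in> V" "V \<subseteq> H_reaching V A AH rho v"
    using tournament_has_H_sink[OF assms(2,4)] by blast
  then have "kH_kernel V A AH rho k {v}"
    by (rule kH_kernel_H_sink) (rule assms(5))
  then show ?thesis ..
qed

end
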